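(* Let $\mathcal S=(\mathcal P,\mathcal L)$ be a linear space with $v$ points and constant line size $k$, $2<k<v$, and $b$ lines; let $G\le\mathrm{Aut}(\mathcal S)$ be transitive on lines, and let $\mathfrak C$ be a non-trivial $G$-invariant partition of $\mathcal P$ with $d$ classes of size $c$. If the permutation group $G^{\mathfrak C}$ induced by $G$ on $\mathfrak C$ contains the alternating group $\mathrm{Alt}_d$ on $\mathfrak C$, then $\mathrm{lcm}_{i=1}^{k}\binom{d}{d_i}$ divides $b$.
   Context: A linear space: a finite set $\mathcal P$ of points and a set $\mathcal L$ of subsets (lines) such that any two distinct points lie on exactly one line and each line has at least two points. For a line $\lambda$ and $0\le i\le k$, $d_i$ is the number of classes $C\in\mathfrak C$ with $|C\cap\lambda|=i$ (independent of $\lambda$ by line-transitivity). *)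

theory Defs
  imports "HOL-Combinatorics.Permutations" "HOL-Library.Disjoint_Sets"
begin

definition linear_space :: "'a set \<Rightarrow> 'a set set \<Rightarrow> bool" where
  "linear_space P L \<longleftrightarrow> finite P \<and> (\<forall>l\<in>L. l \<subseteq> P \<and> card l \<ge> 2) \<and>
     (\<forall>x\<in>P. \<forall>y\<in>P. x \<noteq> y \<longrightarrow> (\<exists>!l. l \<in> L \<and> x \<in> l \<and> y \<in> l))"

definition automorphism :: "'a set \<Rightarrow> 'a set set \<Rightarrow> ('a \<Rightarrow> 'a) \<Rightarrow> bool" where
  "automorphism P L g \<longleftrightarrow> g permutes P \<and> (\<forall>l\<in>L. g ` l \<in> L) \<and> (\<forall>l\<in>L. inv g ` l \<in> L)"

definition aut_subgroup :: "'a set \<Rightarrow> 'a set set \<Rightarrow> ('a \<Rightarrow> 'a) set \<Rightarrow> bool" where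
  "aut_subgroup P L G \<longleftrightarrow> (\<forall>g\<in>G. automorphism P L g) \<and> id \<in> G \<and>
     (\<forall>g\<in>G. \<forall>h\<in>G. g \<circ> h \<in> G) \<and> (\<forall>g\<in>G. inv g \<in> G)"

definition line_transitive :: "'a set set \<Rightarrow> ('a \<Rightarrow> 'a) set \<Rightarrow> bool" where
  "line_transitive L G \<longleftrightarrow> (\<forall>l1\<in>L. \<forall>l2\<in>L. \<exists>g\<in>G. g ` l1 = l2)"

definition G_invariant_partition :: "'a set \<Rightarrow> ('a \<Rightarrow> 'a) set \<Rightarrow> 'a set set \<Rightarrow> bool" where
  "G_invariant_partition P G C \<longleftrightarrow> partition_on P C \<and> (\<forall>g\<in>G. \<forall>X\<in>C. g ` X \<in> C)"

definition induced_contains_Alt :: "('a \<Rightarrow> 'a) set \<Rightarrow> 'a set set \<Rightarrow> bool" where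
  "induced_contains_Alt G C \<longleftrightarrow>
     (\<forall>\<sigma>. \<sigma> permutes C \<and> evenperm \<sigma> \<longrightarrow> (\<exists>g\<in>G. \<forall>X\<in>C. g ` X = \<sigma> X))"

definition dcount :: "'a set set \<Rightarrow> 'a set \<Rightarrow> nat \<Rightarrow> nat" where
  "dcount C l i = card {X \<in> C. card (X \<inter> l) = i}"

end

theory Submission
  imports Defs
begin

text \<open>Fix a line \<open>l\<close> and an \<open>i\<close>, and map every line \<open>u\<close> to the set of classes meeting \<open>u\<close> in
  exactly \<open>i\<close> points. All these sets have \<open>d\<^sub>i\<close> elements, the map is \<open>G\<close>-equivariant, and
  \<open>G\<close> acts transitively on the \<open>d\<^sub>i\<close>-subsets of the classes: via \<open>Alt\<^sub>d\<close> when \<open>d \<ge> 3\<close>, and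
  by a point count in the linear space when \<open>d = 2\<close>. Hence all fibres of the map have the same
  size and \<open>binomial d d\<^sub>i\<close> divides the number of lines.\<close>

lemma card_dvd_card_if_equivariant_transitive:
  fixes f :: "'a \<Rightarrow> 'b" and act :: "'g \<Rightarrow> 'a \<Rightarrow> 'a" and act' :: "'g \<Rightarrow> 'b \<Rightarrow> 'b"
  assumes "finite A" and "finite M" and "f ` A \<subseteq> M"
    and maps: "\<And>g. g \<in> G \<Longrightarrow> act g ` A \<subseteq> A"
    and inj: "\<And>g. g \<in> G \<Longrightarrow> inj_on (act g) A"
    and equivariant: "\<And>g a. g \<in> G \<Longrightarrow> a \<in> A \<Longrightarrow> f (act g a) = act' g (f a)"
    and transitive: "\<And>S T. S \<in> M \<Longrightarrow> T \<in> M \<Longrightarrow> \<exists>g\<in>G. act' g S = T"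
  shows "card M dvd card A"
proof (cases "M = {}")
  case True
  with \<open>f ` A \<subseteq> M\<close> show ?thesis by simp
next
  case False
  then obtain S\<^sub>0 where S\<^sub>0: "S\<^sub>0 \<in> M" by blast
  define fibre where "fibre S = {a \<in> A. f a = S}" for S
  have fibre_le: "card (fibre S) \<le> card (fibre T)" if ST: "S \<in> M" "T \<in> M" for S T
  proof -
    obtain g where g: "g \<in> G" "act' g S = T" using transitive[OF ST] by blast
    show ?thesis
    proof (rule card_inj_on_le)
      show "inj_on (act g) (fibre S)" by (rule inj_on_subset[OF inj[OF g(1)]]) (auto simp: fibre_def)
      show "act g ` fibre S \<subseteq> fibre T" using maps[OF g(1)] equivariant[OF g(1)] g(2) by (auto simp: fibre_def)
      show "finite (fibre T)" using \<open>finite A\<close> by (simp add: fibre_def)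
    qed
  qed
  have "card A = (\<Sum>S\<in>M. card (fibre S))"
    using sum.group[OF \<open>finite A\<close> \<open>finite M\<close> \<open>f ` A \<subseteq> M\<close>, of "\<lambda>_. 1::nat"]
    by (simp add: fibre_def)
  also have "\<dots> = (\<Sum>S\<in>M. card (fibre S\<^sub>0))"
    using fibre_le S\<^sub>0 by (intro sum.cong) (simp_all add: le_antisym)
  finally show ?thesis by simp
qed

lemma exists_permutes_image_eq:
  assumes "finite C" and "S \<subseteq> C" and "T \<subseteq> C" and "card S = card T"
  shows "\<exists>\<sigma>. \<sigma> permutes C \<and> \<sigma> ` S = T"
proof -
  have "finite S" "finite T" using assms finite_subset by auto
  then obtain f where f: "bij_betw f S T" using finite_same_card_bij \<open>card S = card T\<close> by blast
  have "card (C - S) = card (C - T)" using assms \<open>finite S\<close> \<open>finite T\<close> by (simp add: card_Diff_subset)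
  then obtain h where h: "bij_betw h (C - S) (C - T)"
    using finite_same_card_bij \<open>finite C\<close> by blast
  define \<sigma> where "\<sigma> x = (if x \<in> S then f x else if x \<in> C then h x else x)" for x
  have S_T: "bij_betw \<sigma> S T" using f by (rule bij_betw_cong[THEN iffD1, rotated]) (simp add: \<sigma>_def)
  have "bij_betw \<sigma> (C - S) (C - T)" using h by (rule bij_betw_cong[THEN iffD1, rotated]) (simp add: \<sigma>_def)
  then have "bij_betw \<sigma> (S \<union> (C - S)) (T \<union> (C - T))" by (intro bij_betw_combine[OF S_T]) auto
  then have "bij_betw \<sigma> C C" using \<open>S \<subseteq> C\<close> \<open>T \<subseteq> C\<close> by (simp add: Un_absorb1)
  then have "\<sigma> permutes C" by (rule bij_imp_permutes) (use \<open>S \<subseteq> C\<close> in \<open>auto simp: \<sigma>_def\<close>)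
  with bij_betw_imp_surj_on[OF S_T] show ?thesis by blast
qed

lemma exists_evenperm_image_eq:
  assumes "finite C" and "3 \<le> card C" and "S \<subseteq> C" and "T \<subseteq> C" and "card S = card T"
  shows "\<exists>\<sigma>. \<sigma> permutes C \<and> evenperm \<sigma> \<and> \<sigma> ` S = T"
proof -
  obtain \<sigma> where \<sigma>: "\<sigma> permutes C" "\<sigma> ` S = T"
    using exists_permutes_image_eq[OF assms(1,3,4,5)] by blast
  show ?thesis
  proof (cases "evenperm \<sigma>")
    case True
    with \<sigma> show ?thesis by blast
  next
    case False
    \<comment> \<open>As \<open>card C \<ge> 3\<close>, \<open>S\<close> or \<open>C - S\<close> contains two points; swapping them fixes \<open>S\<close>
      and flips the parity.\<close>
    obtain a b where ab: "a \<noteq> b" "a \<in> C" "b \<in> C" "a \<in> S \<longleftrightarrow> b \<in> S"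
    proof -
      have "finite S" using assms(1,3) finite_subset by blast
      have "2 \<le> card S \<or> 2 \<le> card (C - S)"
        using assms(2) card_Diff_subset[OF \<open>finite S\<close> assms(3)] card_mono[OF assms(1,3)] by linarith
      then obtain U where "U = S \<or> U = C - S" "2 \<le> card U" by blast
      moreover have "finite U" using \<open>U = S \<or> U = C - S\<close> \<open>finite S\<close> assms(1) by auto
      ultimately obtain a b where "a \<in> U" "b \<in> U" "a \<noteq> b"
        by (metis card_le_Suc0_iff_eq not_less_eq_eq numeral_2_eq_2)
      moreover have "U \<subseteq> C" "a \<in> S \<longleftrightarrow> b \<in> S"
        using \<open>U = S \<or> U = C - S\<close> \<open>a \<in> U\<close> \<open>b \<in> U\<close> assms(3) by auto
      ultimately show ?thesis using that by blast
    qed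
    let ?\<tau> = "\<sigma> \<circ> transpose a b"
    have "?\<tau> permutes C" using \<sigma>(1) ab by (intro permutes_compose permutes_swap_id)
    moreover have "evenperm ?\<tau>"
      using False ab permutes_imp_permutation[OF assms(1) \<sigma>(1)]
      by (simp add: evenperm_comp evenperm_swap permutation_swap_id)
    moreover have "?\<tau> ` S = T" using ab(4) \<sigma>(2) by (metis image_comp transpose_image_eq)
    ultimately show ?thesis by blast
  qed
qed

lemma linear_space_finite_lines:
  assumes "linear_space P L"
  shows "finite L"
proof -
  have "L \<subseteq> Pow P" using assms by (auto simp: linear_space_def)
  moreover have "finite P" using assms by (simp add: linear_space_def)
  ultimately show ?thesis by (simp add: finite_subset)
qed

lemma card_eq_sum_lines_through:
  assumes "linear_space P L" and "x \<in> P" and "Y \<subseteq> P - {x}"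
  shows "card Y = (\<Sum>u\<in>{u \<in> L. x \<in> u}. card (u \<inter> Y))"
proof -
  have unique_line: "\<exists>!u. u \<in> L \<and> x \<in> u \<and> y \<in> u" if "y \<in> Y" for y
  proof -
    have "y \<in> P" "y \<noteq> x" using assms(3) that by auto
    then show ?thesis using assms(1,2) unfolding linear_space_def by blast
  qed
  have line_exists: "\<exists>u\<in>{u \<in> L. x \<in> u}. y \<in> u" if "y \<in> Y" for y
    using ex1_implies_ex[OF unique_line[OF that]] by blast
  have line_unique: "u = w" if "y \<in> Y" "u \<in> {u \<in> L. x \<in> u}" "w \<in> {u \<in> L. x \<in> u}" "y \<in> u" "y \<in> w"
    for y u w
    using unique_line[OF that(1)] that(2-) by blast
  have "finite Y"
    using assms(1) finite_subset[OF assms(3)] by (simp add: linear_space_def)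
  have "card (\<Union>u\<in>{u \<in> L. x \<in> u}. u \<inter> Y) = (\<Sum>u\<in>{u \<in> L. x \<in> u}. card (u \<inter> Y))"
  proof (rule card_UN_disjoint)
    show "finite {u \<in> L. x \<in> u}" using linear_space_finite_lines[OF assms(1)] by simp
    show "\<forall>u\<in>{u \<in> L. x \<in> u}. finite (u \<inter> Y)" using \<open>finite Y\<close> by blast
    show "\<forall>u\<in>{u \<in> L. x \<in> u}. \<forall>w\<in>{u \<in> L. x \<in> u}. u \<noteq> w \<longrightarrow> (u \<inter> Y) \<inter> (w \<inter> Y) = {}"
      using line_unique by blast
  qed
  moreover have "(\<Union>u\<in>{u \<in> L. x \<in> u}. u \<inter> Y) = Y" using line_exists by blast
  ultimately show ?thesis by simp
qed

text \<open>Counting the points of \<open>X\<^sub>2\<close> and of \<open>X\<^sub>1 - {x}\<close> along the \<open>r\<close> lines through a point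
  \<open>x \<in> X\<^sub>1\<close> gives \<open>c = r (k - i)\<close> and \<open>c - 1 = r (i - 1)\<close>, which forces \<open>r = 1\<close> and \<open>k = 2 i\<close>.\<close>

lemma two_classes_meet_lines_equally:
  assumes "linear_space P L" and "\<forall>u\<in>L. card u = k"
    and "X\<^sub>1 \<union> X\<^sub>2 = P" and "X\<^sub>1 \<inter> X\<^sub>2 = {}" and "card X\<^sub>1 = card X\<^sub>2" and "1 < card X\<^sub>1"
    and meets_X\<^sub>1: "\<forall>u\<in>L. card (X\<^sub>1 \<inter> u) = i"
  shows "\<forall>u\<in>L. card (X\<^sub>2 \<inter> u) = i"
proof -
  have "finite (X\<^sub>1 \<union> X\<^sub>2)" using assms(1,3) by (simp add: linear_space_def)
  then have "finite X\<^sub>1" "finite X\<^sub>2" by simp_all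
  have meets_X\<^sub>2: "card (X\<^sub>2 \<inter> u) = k - i" if "u \<in> L" for u
  proof -
    have "u \<subseteq> P" using assms(1) that by (simp add: linear_space_def)
    then have "u = (X\<^sub>1 \<inter> u) \<union> (X\<^sub>2 \<inter> u)" using assms(3) by blast
    moreover have "(X\<^sub>1 \<inter> u) \<inter> (X\<^sub>2 \<inter> u) = {}" using assms(4) by blast
    ultimately have "card u = card (X\<^sub>1 \<inter> u) + card (X\<^sub>2 \<inter> u)"
      using \<open>finite X\<^sub>1\<close> \<open>finite X\<^sub>2\<close> by (metis card_Un_disjoint finite_Int)
    then show ?thesis using assms(2) meets_X\<^sub>1 that by simp
  qed
  obtain x where "x \<in> X\<^sub>1" using assms(6) by fastforce
  define r where "r = card {u \<in> L. x \<in> u}"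
  have "card X\<^sub>2 = (\<Sum>u\<in>{u \<in> L. x \<in> u}. card (u \<inter> X\<^sub>2))"
    using \<open>x \<in> X\<^sub>1\<close> assms(3,4) by (intro card_eq_sum_lines_through[OF assms(1)]) auto
  also have "\<dots> = r * (k - i)" using meets_X\<^sub>2 by (simp add: r_def Int_commute)
  finally have card_X\<^sub>2: "card X\<^sub>2 = r * (k - i)" .
  have "card (X\<^sub>1 - {x}) = (\<Sum>u\<in>{u \<in> L. x \<in> u}. card (u \<inter> (X\<^sub>1 - {x})))"
    using \<open>x \<in> X\<^sub>1\<close> assms(3) by (intro card_eq_sum_lines_through[OF assms(1)]) auto
  also have "\<dots> = r * (i - 1)"
  proof -
    have "card (u \<inter> (X\<^sub>1 - {x})) = i - 1" if "u \<in> L" "x \<in> u" for u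
    proof -
      have "u \<inter> (X\<^sub>1 - {x}) = (X\<^sub>1 \<inter> u) - {x}" by blast
      then show ?thesis using meets_X\<^sub>1 that \<open>x \<in> X\<^sub>1\<close> \<open>finite X\<^sub>1\<close> by simp
    qed
    then show ?thesis by (simp add: r_def)
  qed
  finally have c_minus_1: "card X\<^sub>1 - 1 = r * (i - 1)" using \<open>x \<in> X\<^sub>1\<close> \<open>finite X\<^sub>1\<close> by simp
  with card_X\<^sub>2 assms(5,6) have eq: "r * (k - i) = r * (i - 1) + 1" by linarith
  from c_minus_1 assms(6) have "i \<noteq> 0" by auto
  from eq have "r dvd 1" by (metis dvd_add_right_iff dvd_triv_left)
  with eq \<open>i \<noteq> 0\<close> have "k - i = i" by simp
  then show ?thesis using meets_X\<^sub>2 by simp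
qed

lemma aut_subgroup_bij:
  assumes "aut_subgroup P L G" and "g \<in> G"
  shows "bij g"
  using assms by (auto simp: aut_subgroup_def automorphism_def intro: permutes_bij)

lemma aut_subgroup_image_line:
  assumes "aut_subgroup P L G" and "g \<in> G" and "u \<in> L"
  shows "g ` u \<in> L"
  using assms by (auto simp: aut_subgroup_def automorphism_def)

lemma G_invariant_partition_image_classes:
  assumes "aut_subgroup P L G" and "G_invariant_partition P G C" and "g \<in> G"
  shows "(\<lambda>X. g ` X) ` C = C"
proof
  show "(\<lambda>X. g ` X) ` C \<subseteq> C"
    using assms(2,3) by (auto simp: G_invariant_partition_def)
  show "C \<subseteq> (\<lambda>X. g ` X) ` C"
  proof
    fix X assume "X \<in> C"
    have "inv g \<in> G" using assms(1,3) by (simp add: aut_subgroup_def)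
    then have "inv g ` X \<in> C" using assms(2) \<open>X \<in> C\<close> by (simp add: G_invariant_partition_def)
    moreover have "X = g ` inv g ` X"
      using aut_subgroup_bij[OF assms(1,3)] by (simp add: bij_is_surj image_f_inv_f)
    ultimately show "X \<in> (\<lambda>X. g ` X) ` C" by blast
  qed
qed

definition classes_meeting :: "'a set set \<Rightarrow> 'a set \<Rightarrow> nat \<Rightarrow> 'a set set" where
  "classes_meeting C l i = {X \<in> C. card (X \<inter> l) = i}"

lemma dcount_eq_card_classes_meeting: "dcount C l i = card (classes_meeting C l i)"
  by (simp add: dcount_def classes_meeting_def)

lemma classes_meeting_image:
  assumes "bij g" and "(\<lambda>X. g ` X) ` C = C"
  shows "classes_meeting C (g ` l) i = (\<lambda>X. g ` X) ` classes_meeting C l i"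
proof -
  have card_eq: "card (g ` X \<inter> g ` l) = card (X \<inter> l)" for X
    using bij_is_inj[OF assms(1)] by (simp add: image_Int[symmetric] card_image inj_on_subset)
  have "classes_meeting C (g ` l) i = {Y \<in> (\<lambda>X. g ` X) ` C. card (Y \<inter> g ` l) = i}"
    using assms(2) by (simp add: classes_meeting_def)
  also have "\<dots> = (\<lambda>X. g ` X) ` classes_meeting C l i"
    using card_eq by (auto simp: classes_meeting_def)
  finally show ?thesis .
qed

lemma induced_Alt_transitive_on_subsets:
  assumes "induced_contains_Alt G C" and "finite C" and "3 \<le> card C"
    and "S \<subseteq> C" and "T \<subseteq> C" and "card S = card T"
  shows "\<exists>g\<in>G. (\<lambda>X. g ` X) ` S = T"
proof -
  obtain \<sigma> where \<sigma>: "\<sigma> permutes C" "evenperm \<sigma>" "\<sigma> ` S = T"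
    using exists_evenperm_image_eq[OF assms(2-)] by blast
  then obtain g where "g \<in> G" "\<forall>X\<in>C. g ` X = \<sigma> X"
    using assms(1) by (auto simp: induced_contains_Alt_def)
  moreover from this have "(\<lambda>X. g ` X) ` S = \<sigma> ` S" using assms(4) by (auto intro: image_cong)
  ultimately show ?thesis using \<sigma>(3) by blast
qed

locale line_transitive_partition =
  fixes P :: "'a set" and L :: "'a set set" and G :: "('a \<Rightarrow> 'a) set"
    and C :: "'a set set" and k c :: nat
  assumes linear_space: "linear_space P L"
    and line_size: "\<forall>u\<in>L. card u = k"
    and aut_subgroup: "aut_subgroup P L G"
    and line_transitive: "line_transitive L G"
    and invariant_partition: "G_invariant_partition P G C"
    and class_size: "\<forall>X\<in>C. card X = c"
    and nontrivial_classes: "1 < c"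
begin

lemma finite_classes: "finite C"
  using linear_space invariant_partition finite_elements
  by (auto simp: linear_space_def G_invariant_partition_def)

lemma line_transitiveE:
  assumes "l \<in> L" and "u \<in> L"
  obtains g where "g \<in> G" and "g ` l = u"
  using line_transitive assms unfolding line_transitive_def by blast

lemma classes_meeting_image_aut:
  assumes "g \<in> G"
  shows "classes_meeting C (g ` u) i = (\<lambda>X. g ` X) ` classes_meeting C u i"
  using classes_meeting_image[OF aut_subgroup_bij[OF aut_subgroup assms]
      G_invariant_partition_image_classes[OF aut_subgroup invariant_partition assms]] .

lemma two_classes_swapped:
  assumes C: "C = {X\<^sub>1, X\<^sub>2}" and "X\<^sub>1 \<noteq> X\<^sub>2"
    and "l \<in> L" and l_meets: "classes_meeting C l i = {X\<^sub>1}"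
  shows "\<exists>g\<in>G. g ` X\<^sub>1 = X\<^sub>2"
proof (rule ccontr)
  assume "\<not> ?thesis"
  then have fixes_X\<^sub>1: "g ` X\<^sub>1 = X\<^sub>1" if "g \<in> G" for g
    using invariant_partition that C by (auto simp: G_invariant_partition_def)
  have "card (X\<^sub>1 \<inter> l) = i" using l_meets by (auto simp: classes_meeting_def)
  have "\<forall>u\<in>L. card (X\<^sub>1 \<inter> u) = i"
  proof
    fix u assume "u \<in> L"
    with \<open>l \<in> L\<close> obtain g where g: "g \<in> G" "g ` l = u" by (rule line_transitiveE)
    have inj: "inj g" using bij_is_inj[OF aut_subgroup_bij[OF aut_subgroup g(1)]] .
    have "card (X\<^sub>1 \<inter> u) = card (g ` (X\<^sub>1 \<inter> l))"
      using fixes_X\<^sub>1[OF g(1)] g(2) inj by (simp add: image_Int)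
    also have "\<dots> = i" using \<open>card (X\<^sub>1 \<inter> l) = i\<close> inj by (simp add: card_image inj_on_subset)
    finally show "card (X\<^sub>1 \<inter> u) = i" .
  qed
  moreover have "X\<^sub>1 \<union> X\<^sub>2 = P" and "X\<^sub>1 \<inter> X\<^sub>2 = {}"
    using invariant_partition \<open>X\<^sub>1 \<noteq> X\<^sub>2\<close> C
    by (auto simp: G_invariant_partition_def partition_on_def disjoint_def)
  ultimately have "card (X\<^sub>2 \<inter> l) = i"
    using two_classes_meet_lines_equally[OF linear_space line_size] class_size nontrivial_classes
      \<open>l \<in> L\<close> C
    by auto
  then have "X\<^sub>2 \<in> classes_meeting C l i" using C by (simp add: classes_meeting_def)
  with l_meets \<open>X\<^sub>1 \<noteq> X\<^sub>2\<close> show False by simp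
qed

lemma transitive_on_subsets_of_card_dcount:
  assumes "induced_contains_Alt G C"
    and "l \<in> L" and "0 < dcount C l i" and "dcount C l i < card C"
    and "S \<subseteq> C" and "T \<subseteq> C" and "card S = dcount C l i" and "card T = dcount C l i"
  shows "\<exists>g\<in>G. (\<lambda>X. g ` X) ` S = T"
proof -
  consider "3 \<le> card C" | "card C = 2" using assms(3,4) by linarith
  then show ?thesis
  proof cases
    case 1
    then show ?thesis
      using induced_Alt_transitive_on_subsets[OF assms(1) finite_classes _ assms(5,6)] assms(7,8)
      by simp
  next
    case 2
    \<comment> \<open>\<open>Alt\<^sub>2\<close> is trivial, so here the transitivity comes from the geometry.\<close>
    then have m: "card (classes_meeting C l i) = 1"
      using assms(3,4) by (simp add: dcount_eq_card_classes_meeting)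
    then obtain X\<^sub>1 where X\<^sub>1: "classes_meeting C l i = {X\<^sub>1}" by (rule card_1_singletonE)
    then have "X\<^sub>1 \<in> C" by (auto simp: classes_meeting_def)
    with 2 have "card (C - {X\<^sub>1}) = 1" by simp
    then obtain X\<^sub>2 where "C - {X\<^sub>1} = {X\<^sub>2}" by (rule card_1_singletonE)
    with \<open>X\<^sub>1 \<in> C\<close> have C: "C = {X\<^sub>1, X\<^sub>2}" "X\<^sub>1 \<noteq> X\<^sub>2" by auto
    obtain g where g: "g \<in> G" "g ` X\<^sub>1 = X\<^sub>2"
      using two_classes_swapped[OF C assms(2) X\<^sub>1] by blast
    have "{g ` X\<^sub>1, g ` X\<^sub>2} = {X\<^sub>1, X\<^sub>2}"
      using G_invariant_partition_image_classes[OF aut_subgroup invariant_partition g(1)] C by simp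
    with g(2) C(2) have "g ` X\<^sub>2 = X\<^sub>1" by blast
    have "S = {X\<^sub>1} \<or> S = {X\<^sub>2}" "T = {X\<^sub>1} \<or> T = {X\<^sub>2}"
      using assms(5-8) m C(1) by (auto simp: dcount_eq_card_classes_meeting card_1_singleton_iff)
    then consider "S = T" | "S = {X\<^sub>1}" "T = {X\<^sub>2}" | "S = {X\<^sub>2}" "T = {X\<^sub>1}" by blast
    then show ?thesis
    proof cases
      case 1
      moreover have "id \<in> G" using aut_subgroup by (simp add: aut_subgroup_def)
      ultimately show ?thesis by (intro bexI[of _ id]) simp_all
    next
      case 2
      with g show ?thesis by (intro bexI[of _ g]) simp_all
    next
      case 3
      with g \<open>g ` X\<^sub>2 = X\<^sub>1\<close> show ?thesis by (intro bexI[of _ g]) simp_all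
    qed
  qed
qed

lemma choose_dcount_dvd_card_lines:
  assumes "induced_contains_Alt G C" and "l \<in> L"
  shows "card C choose dcount C l i dvd card L"
proof (cases "0 < dcount C l i \<and> dcount C l i < card C")
  case False
  moreover have "dcount C l i \<le> card C"
    using finite_classes by (auto simp: dcount_def intro: card_mono)
  ultimately show ?thesis by (auto simp: le_less)
next
  case True
  let ?M = "{S. S \<subseteq> C \<and> card S = dcount C l i}"
  have inj_image: "inj_on (\<lambda>X. g ` X) A" if "g \<in> G" for g A
    using bij_is_inj[OF aut_subgroup_bij[OF aut_subgroup that]] by (simp add: inj_on_image inj_on_subset)
  have "card ?M dvd card L"
  proof (rule card_dvd_card_if_equivariant_transitive
      [where f = "\<lambda>u. classes_meeting C u i" and act = "\<lambda>g u. g ` u" and act' = "\<lambda>g S. (\<lambda>X. g ` X) ` S"])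
    show "finite L" using linear_space_finite_lines[OF linear_space] .
    show "finite ?M" using finite_classes by simp
    show "(\<lambda>u. classes_meeting C u i) ` L \<subseteq> ?M"
    proof clarify
      fix u assume "u \<in> L"
      with \<open>l \<in> L\<close> obtain g where g: "g \<in> G" "g ` l = u" by (rule line_transitiveE)
      have "classes_meeting C u i = (\<lambda>X. g ` X) ` classes_meeting C l i"
        using classes_meeting_image_aut[OF g(1), of l i] unfolding g(2) .
      moreover have "classes_meeting C l i \<subseteq> C" by (auto simp: classes_meeting_def)
      ultimately show "classes_meeting C u i \<subseteq> C \<and> card (classes_meeting C u i) = dcount C l i"
        using image_mono[of _ C "\<lambda>X. g ` X"] inj_image[OF g(1)]
          G_invariant_partition_image_classes[OF aut_subgroup invariant_partition g(1)]
        by (simp add: card_image dcount_eq_card_classes_meeting)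
    qed
    show "(\<lambda>u. g ` u) ` L \<subseteq> L" if "g \<in> G" for g
      using aut_subgroup_image_line[OF aut_subgroup that] by blast
    show "inj_on (\<lambda>u. g ` u) L" if "g \<in> G" for g
      using inj_image[OF that] .
    show "classes_meeting C (g ` u) i = (\<lambda>X. g ` X) ` classes_meeting C u i" if "g \<in> G" for g u
      using classes_meeting_image_aut[OF that] .
    show "\<exists>g\<in>G. (\<lambda>X. g ` X) ` S = T" if "S \<in> ?M" "T \<in> ?M" for S T
      using transitive_on_subsets_of_card_dcount[OF assms] True that by auto
  qed
  then show ?thesis using n_subsets[OF finite_classes] by simp
qed

end

theorem lemma4p8:
  fixes P :: "'a set" and L :: "'a set set" and G :: "('a \<Rightarrow> 'a) set"
    and C :: "'a set set" and k d c :: nat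
  assumes "linear_space P L"
    and "\<forall>l\<in>L. card l = k"
    and "2 < k" and "k < card P"
    and "aut_subgroup P L G"
    and "line_transitive L G"
    and "G_invariant_partition P G C"
    and "card C = d" and "\<forall>X\<in>C. card X = c"
    and "1 < c" and "c < card P"
    and "induced_contains_Alt G C"
  shows "\<forall>l\<in>L. Lcm ((\<lambda>i. d choose dcount C l i) ` {1..k}) dvd card L"
proof
  fix l assume "l \<in> L"
  interpret line_transitive_partition P L G C k c
    using assms by unfold_locales
  show "Lcm ((\<lambda>i. d choose dcount C l i) ` {1..k}) dvd card L"
    using choose_dcount_dvd_card_lines[OF assms(12) \<open>l \<in> L\<close>] assms(8)
    by (auto intro: Lcm_least)
qed

end
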